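(* Let $A,B\subseteq V$ be disjoint and $O_A,O_B$ operators on the physical sites of $A$ and $B$ respectively. Assume $Z^X_{BP}\neq0$ for $X\in\{\emptyset,A,B,AB\}$, $\langle O_A\rangle,\langle O_B\rangle\ne0$, and that for each such $X$ the cluster expansion $\log\mathcal Z^X=\log Z^X_{BP}+\sum_{\mathbf W\text{ connected over }\mathcal L_{AB}}\phi(\mathbf W)Z^X_{\mathbf W}$ holds with an absolutely convergent series (with consistent choices of logarithm). Then the connected correlator $\langle O_AO_B\rangle_c:=\langle O_AO_B\rangle-\langle O_A\rangle\langle O_B\rangle$ satisfies $$\langle O_AO_B\rangle_c=\langle O_A\rangle\langle O_B\rangle\left[\exp\Bigg\{\sum_{\substack{\mathbf W\text{ connected over }\mathcal L_{AB}\\ \mathrm{supp}(\mathbf W)\cap A\ne\emptyset,\ \mathrm{supp}(\mathbf W)\cap B\ne\emptyset}}\phi(\mathbf W)\big(Z^{AB}_{\mathbf W}+Z_{\mathbf W}-Z^A_{\mathbf W}-Z^B_{\mathbf W}\big)\Bigg\}-1\right].$$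
   Context: Let $|\psi\rangle$ be a PEPS on a finite graph $G=(V,E)$; $\mathcal Z=\langle\psi|\psi\rangle>0$ is the norm network. For $X\in\{A,B,AB\}$, $\mathcal Z^X$ is the network for $\langle\psi|O_X|\psi\rangle$ with $O_X=O_A$, $O_B$, $O_AO_B$ respectively (operators inserted at the corresponding sites, tensors unchanged elsewhere); $\mathcal Z^\emptyset=\mathcal Z$. Expectations: $\langle O_X\rangle=\mathcal Z^X/\mathcal Z$. Fix a BP fixed point of $\mathcal Z$ (messages $\mu_{v\to w}$ with $I_{vw}=\mu_{v\to w}\star\mu_{w\to v}\ne0$, each vertex tensor contracted with all incoming messages except from $w$ proportional to $\mu_{v\to w}$), used for all networks; $\mathcal P^\perp_{vw}=\mathbb 1-\mu_{v\to w}\otimes\mu_{w\to v}/I_{vw}$. For $F\subseteq E$, $\tilde Z^X_F$ is the contraction of $\mathcal Z^X$ with $\mathcal P^\perp$ on edges in $F$ and $\mu\otimes\mu/I$ elsewhere; $Z^X_{BP}=\tilde Z^X_\emptyset$. $\mathcal L_{AB}$: connected subgraphs of $G$ with at least one edge in which every vertex not in $A\cup B$ has degree $\ge2$; supports are vertex sets; weights $Z^X_l=\tilde Z^X_{E(l)}/Z^X_{BP}$ (no superscript = $\mathcal Z$). Compatible = vertex-disjoint. Clusters $\mathbf W=\{(l_i,\eta_i)\}$ are finite multisets over $\mathcal L_{AB}$ with $Z^X_{\mathbf W}=\prod(Z^X_{l_i})^{\eta_i}$, $\mathrm{supp}(\mathbf W)=\bigcup\mathrm{supp}(l_i)$; interaction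 graph: $\eta_i$ vertices per $l_i$, adjacent iff equal or incompatible; connected if it is connected. Ursell function $\phi(\mathbf W)=\frac1{\prod\eta_i!}\sum_C(-1)^{|E(C)|}$ over connected spanning subgraphs $C$ of the interaction graph. *)

theory Defs
  imports "HOL-Analysis.Analysis" "HOL-Library.Multiset"
begin

text \<open>Graph G = (V,E): E is a set of 2-element subsets of V.
  PEPS: bond dimension d e on each edge, physical dimension p v on each vertex,
  local tensors Aten v s alpha (s < p v physical index, alpha assigns a bond index
  < d e to each edge e incident to v).
  Norm network: each edge carries a pair (ket index, bra index).
  Half-edge configurations h v e : index pair on edge e at its end v.\<close>

definition inc :: "'v set set \<Rightarrow> 'v \<Rightarrow> 'v set set" where
  "inc E v = {e \<in> E. v \<in> e}"

definition bonds :: "('v set \<Rightarrow> nat) \<Rightarrow> 'v set \<Rightarrow> (nat \<times> nat) set" where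
  "bonds d e = {..<d e} \<times> {..<d e}"

definition hconfigs :: "'v set \<Rightarrow> 'v set set \<Rightarrow> ('v set \<Rightarrow> nat)
    \<Rightarrow> ('v \<Rightarrow> 'v set \<Rightarrow> nat \<times> nat) set" where
  "hconfigs V E d = (\<Pi>\<^sub>E v\<in>V. \<Pi>\<^sub>E e\<in>inc E v. bonds d e)"

definition physconf :: "('v \<Rightarrow> nat) \<Rightarrow> 'v set \<Rightarrow> ('v \<Rightarrow> nat) set" where
  "physconf p S = (\<Pi>\<^sub>E v\<in>S. {..<p v})"

text \<open>Double-layer block tensor on the sites S with operator O (matrix on the
  physical configurations of S) inserted: sum_{s,s'} O(s,s') A^{s'} (ket) conj(A^{s}) (bra),
  i.e. the block of the network for <psi|O|psi>.\<close>
definition blockT :: "'v set set \<Rightarrow> ('v \<Rightarrow> nat) \<Rightarrow> ('v \<Rightarrow> nat \<Rightarrow> ('v set \<Rightarrow> nat) \<Rightarrow> complex)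
    \<Rightarrow> 'v set \<Rightarrow> (('v \<Rightarrow> nat) \<Rightarrow> ('v \<Rightarrow> nat) \<Rightarrow> complex)
    \<Rightarrow> ('v \<Rightarrow> 'v set \<Rightarrow> nat \<times> nat) \<Rightarrow> complex" where
  "blockT E p Aten S Op h =
     (\<Sum>s\<in>physconf p S. \<Sum>s'\<in>physconf p S. Op s s' *
        (\<Prod>v\<in>S. Aten v (s' v) (\<lambda>e\<in>inc E v. fst (h v e)) *
                  cnj (Aten v (s v) (\<lambda>e\<in>inc E v. snd (h v e)))))"

definition normT :: "'v set set \<Rightarrow> ('v \<Rightarrow> nat) \<Rightarrow> ('v \<Rightarrow> nat \<Rightarrow> ('v set \<Rightarrow> nat) \<Rightarrow> complex)
    \<Rightarrow> 'v \<Rightarrow> ('v set \<Rightarrow> nat \<times> nat) \<Rightarrow> complex" where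
  "normT E p Aten v x =
     (\<Sum>t<p v. Aten v t (\<lambda>e\<in>inc E v. fst (x e)) * cnj (Aten v t (\<lambda>e\<in>inc E v. snd (x e))))"

text \<open>Contraction of the network with operator O inserted on the sites S and with
  the matrix M e placed on each edge e; M e is a function of the two half-edge
  indices, given as a map from the endpoints of e to index pairs.\<close>
definition netc :: "'v set \<Rightarrow> 'v set set \<Rightarrow> ('v set \<Rightarrow> nat) \<Rightarrow> ('v \<Rightarrow> nat)
    \<Rightarrow> ('v \<Rightarrow> nat \<Rightarrow> ('v set \<Rightarrow> nat) \<Rightarrow> complex)
    \<Rightarrow> 'v set \<Rightarrow> (('v \<Rightarrow> nat) \<Rightarrow> ('v \<Rightarrow> nat) \<Rightarrow> complex)
    \<Rightarrow> ('v set \<Rightarrow> ('v \<Rightarrow> nat \<times> nat) \<Rightarrow> complex) \<Rightarrow> complex" where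
  "netc V E d p Aten S Op M =
     (\<Sum>h\<in>hconfigs V E d. blockT E p Aten S Op h *
         (\<Prod>v\<in>V - S. normT E p Aten v (h v)) *
         (\<Prod>e\<in>E. M e (\<lambda>u\<in>e. h u e)))"

definition other :: "'v \<Rightarrow> 'v set \<Rightarrow> 'v" where
  "other u e = (THE w. w \<in> e \<and> w \<noteq> u)"

text \<open>Messages: mu v w is the message from v to w, a vector on index pairs of edge {v,w}.\<close>
definition msgI :: "('v \<Rightarrow> 'v \<Rightarrow> nat \<times> nat \<Rightarrow> complex) \<Rightarrow> ('v set \<Rightarrow> nat) \<Rightarrow> 'v set \<Rightarrow> complex" where
  "msgI mu d e = (\<Sum>x\<in>bonds d e. \<Prod>u\<in>e. mu u (other u e) x)"

definition idm :: "'v set \<Rightarrow> ('v \<Rightarrow> nat \<times> nat) \<Rightarrow> complex" where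
  "idm e g = (if \<forall>u\<in>e. \<forall>w\<in>e. g u = g w then 1 else 0)"

text \<open>Rank-one BP projector mu_{v->w} (x) mu_{w->v} / I_vw: the end at u is
  contracted with the message coming into u.\<close>
definition bpproj :: "('v \<Rightarrow> 'v \<Rightarrow> nat \<times> nat \<Rightarrow> complex) \<Rightarrow> ('v set \<Rightarrow> nat) \<Rightarrow> 'v set
    \<Rightarrow> ('v \<Rightarrow> nat \<times> nat) \<Rightarrow> complex" where
  "bpproj mu d e g = (\<Prod>u\<in>e. mu (other u e) u (g u)) / msgI mu d e"

definition edgeM :: "('v \<Rightarrow> 'v \<Rightarrow> nat \<times> nat \<Rightarrow> complex) \<Rightarrow> ('v set \<Rightarrow> nat) \<Rightarrow> 'v set set
    \<Rightarrow> 'v set \<Rightarrow> ('v \<Rightarrow> nat \<times> nat) \<Rightarrow> complex" where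
  "edgeM mu d F e g = (if e \<in> F then idm e g - bpproj mu d e g else bpproj mu d e g)"

definition Zfull where
  "Zfull V E d p Aten S Op = netc V E d p Aten S Op (\<lambda>e. idm e)"

definition Ztilde where
  "Ztilde V E d p Aten mu S Op F = netc V E d p Aten S Op (edgeM mu d F)"

definition ZBP where
  "ZBP V E d p Aten mu S Op = Ztilde V E d p Aten mu S Op {}"

definition bp_fixed_point where
  "bp_fixed_point V E d p Aten mu \<longleftrightarrow>
     (\<forall>e\<in>E. msgI mu d e \<noteq> 0) \<and>
     (\<forall>v\<in>V. \<forall>e\<in>inc E v. \<exists>c::complex. \<forall>x\<in>bonds d e.
        (\<Sum>y\<in>{y\<in>(\<Pi>\<^sub>E e'\<in>inc E v. bonds d e'). y e = x}.
            normT E p Aten v y * (\<Prod>e'\<in>inc E v - {e}. mu (other v e') v (y e')))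
        = c * mu v (other v e) x)"

text \<open>Polymers L_AB: a polymer is the (nonempty) edge set F of a connected subgraph;
  its vertex set (support) is the union of F.\<close>
definition esupp :: "'v set set \<Rightarrow> 'v set" where
  "esupp F = \<Union>F"

definition edges_connected :: "'v set set \<Rightarrow> bool" where
  "edges_connected F \<longleftrightarrow>
     (\<forall>u\<in>\<Union>F. \<forall>w\<in>\<Union>F. (u, w) \<in> {(x, y). \<exists>e\<in>F. x \<in> e \<and> y \<in> e}\<^sup>*)"

definition polymers :: "'v set set \<Rightarrow> 'v set \<Rightarrow> 'v set \<Rightarrow> 'v set set set" where
  "polymers E A B = {F. F \<subseteq> E \<and> F \<noteq> {} \<and> edges_connected F \<and>
        (\<forall>v\<in>\<Union>F - (A \<union> B). card (inc F v) \<ge> 2)}"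

definition iedges :: "'v set set list \<Rightarrow> nat set set" where
  "iedges xs = {{i, j} | i j. i < length xs \<and> j < length xs \<and> i \<noteq> j \<and>
        (xs ! i = xs ! j \<or> esupp (xs ! i) \<inter> esupp (xs ! j) \<noteq> {})}"

definition spans_connected :: "nat \<Rightarrow> nat set set \<Rightarrow> bool" where
  "spans_connected n C \<longleftrightarrow> (\<forall>i<n. \<forall>j<n. (i, j) \<in> {(a, b). {a, b} \<in> C}\<^sup>*)"

definition enum_cluster :: "'v set set multiset \<Rightarrow> 'v set set list" where
  "enum_cluster W = (SOME xs. mset xs = W)"

definition cluster_connected :: "'v set set multiset \<Rightarrow> bool" where
  "cluster_connected W \<longleftrightarrow> W \<noteq> {#} \<and>
     spans_connected (size W) (iedges (enum_cluster W))"

definition ursell :: "'v set set multiset \<Rightarrow> real" where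
  "ursell W = (1 / (\<Prod>l\<in>set_mset W. fact (count W l))) *
     (\<Sum>C\<in>{C. C \<subseteq> iedges (enum_cluster W) \<and> spans_connected (size W) C}.
        (-1) ^ card C)"

definition connected_clusters :: "'v set set \<Rightarrow> 'v set \<Rightarrow> 'v set \<Rightarrow> 'v set set multiset set" where
  "connected_clusters E A B = {W. set_mset W \<subseteq> polymers E A B \<and> cluster_connected W}"

definition csupp :: "'v set set multiset \<Rightarrow> 'v set" where
  "csupp W = (\<Union>l\<in>set_mset W. esupp l)"

definition Zpoly where
  "Zpoly V E d p Aten mu S Op l = Ztilde V E d p Aten mu S Op l / ZBP V E d p Aten mu S Op"

definition Zclus where
  "Zclus V E d p Aten mu S Op W = (\<Prod>l\<in>set_mset W. (Zpoly V E d p Aten mu S Op l) ^ count W l)"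

definition expect where
  "expect V E d p Aten S Op = Zfull V E d p Aten S Op / Zfull V E d p Aten {} (\<lambda>_ _. 1)"

definition opprod :: "'v set \<Rightarrow> (('v \<Rightarrow> nat) \<Rightarrow> ('v \<Rightarrow> nat) \<Rightarrow> complex) \<Rightarrow> 'v set
    \<Rightarrow> (('v \<Rightarrow> nat) \<Rightarrow> ('v \<Rightarrow> nat) \<Rightarrow> complex) \<Rightarrow> ('v \<Rightarrow> nat) \<Rightarrow> ('v \<Rightarrow> nat) \<Rightarrow> complex" where
  "opprod A OA B OB s s' = OA (restrict s A) (restrict s' A) * OB (restrict s B) (restrict s' B)"

end

theory Submission
  imports Defs
begin

(* If no edge of F meets B, every edge at a site of B carries the rank-one BP projector, which is a
   product over the two endpoints of the edge.  Hence the sites of B decouple from the rest of the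
   network: inserting O_B on B multiplies tilde Z^X_F by a factor that depends only on B and O_B,
   not on F or X.  So polymers avoiding B have the same weight for X \<union> B as for X, and F = {}
   gives Z^AB_BP Z_BP = Z^A_BP Z^B_BP.  In the combination log Z^AB + log Z - log Z^A - log Z^B of
   the four cluster expansions the BP terms therefore cancel, and so does every cluster missing A
   or B; what is left is Z^AB Z = exp T Z^A Z^B, with T the sum over the clusters linking A and B. *)

lemma sum_PiE_merge:
  assumes "I \<inter> J = {}"
  shows "(\<Sum>h\<in>Pi\<^sub>E (I \<union> J) C. f h)
       = (\<Sum>x\<in>Pi\<^sub>E I C. \<Sum>y\<in>Pi\<^sub>E J C. f (merge I J (x, y)))"
proof -
  have "(\<Sum>h\<in>Pi\<^sub>E (I \<union> J) C. f h)
      = (\<Sum>(x, y)\<in>Pi\<^sub>E I C \<times> Pi\<^sub>E J C. f (merge I J (x, y)))"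
    by (rule sum.reindex_bij_witness[where i = "merge I J" and j = "\<lambda>h. (restrict h I, restrict h J)"])
      (use assms in \<open>auto simp: restrict_PiE_iff\<close>)
  then show ?thesis
    by (simp add: sum.cartesian_product)
qed

lemma infsum_combination_vanishing_outside:
  fixes f1 f2 f3 f4 g :: "'a \<Rightarrow> 'b::{topological_ab_group_add, t2_space}"
  assumes "f1 summable_on C" "f2 summable_on C" "f3 summable_on C" "f4 summable_on C" "R \<subseteq> C"
    and "\<And>x. x \<in> C \<Longrightarrow> g x = f1 x + f2 x - f3 x - f4 x" and "\<And>x. x \<in> C - R \<Longrightarrow> g x = 0"
  shows "infsum g R = infsum f1 C + infsum f2 C - infsum f3 C - infsum f4 C"
proof -
  have "infsum g R = infsum g C"
    using assms(5,7) by (intro infsum_cong_neutral) auto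
  also have "\<dots> = infsum (\<lambda>x. f1 x + f2 x - f3 x - f4 x) C"
    using assms(6) by (rule infsum_cong)
  also have "\<dots> = infsum f1 C + infsum f2 C - infsum f3 C - infsum f4 C"
    unfolding diff_conv_add_uminus using assms(1-4)
    by (intro infsumI has_sum_add has_sum_infsum) (simp_all add: has_sum_uminus has_sum_infsum)
  finally show ?thesis .
qed

lemma blockT_cong_config:
  "(\<And>v. v \<in> S \<Longrightarrow> h v = h' v) \<Longrightarrow> blockT E p Aten S Op h = blockT E p Aten S Op h'"
  unfolding blockT_def by (intro sum.cong refl prod.cong) auto

lemma blockT_cong_op:
  "(\<And>s s'. s \<in> physconf p S \<Longrightarrow> s' \<in> physconf p S \<Longrightarrow> Op s s' = Op' s s')
   \<Longrightarrow> blockT E p Aten S Op h = blockT E p Aten S Op' h"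
  unfolding blockT_def by (intro sum.cong refl) auto

lemma blockT_opprod:
  assumes "finite S" "finite T" "S \<inter> T = {}"
  shows "blockT E p Aten (S \<union> T) (opprod S OS T OT) h = blockT E p Aten S OS h * blockT E p Aten T OT h"
proof -
  define K where
    "K v t t' = Aten v t' (\<lambda>e\<in>inc E v. fst (h v e)) * cnj (Aten v t (\<lambda>e\<in>inc E v. snd (h v e)))"
    for v t t'
  define P where "P X = physconf p X" for X
  have merge_P: "(\<Sum>s\<in>P (S \<union> T). g s) = (\<Sum>s1\<in>P S. \<Sum>s2\<in>P T. g (merge S T (s1, s2)))"
    for g :: "_ \<Rightarrow> complex"
    unfolding P_def physconf_def using assms(3) by (rule sum_PiE_merge)
  have summand: "opprod S OS T OT (merge S T (s1, s2)) (merge S T (s1', s2')) *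
        (\<Prod>v\<in>S \<union> T. K v (merge S T (s1, s2) v) (merge S T (s1', s2') v))
      = (OS s1 s1' * (\<Prod>v\<in>S. K v (s1 v) (s1' v))) * (OT s2 s2' * (\<Prod>v\<in>T. K v (s2 v) (s2' v)))"
    if "s1 \<in> P S" "s1' \<in> P S" "s2 \<in> P T" "s2' \<in> P T" for s1 s2 s1' s2'
    using that assms by (simp add: P_def physconf_def opprod_def prod.union_disjoint mult_ac)
  have "blockT E p Aten (S \<union> T) (opprod S OS T OT) h =
      (\<Sum>s1\<in>P S. \<Sum>s2\<in>P T. \<Sum>s1'\<in>P S. \<Sum>s2'\<in>P T.
        (OS s1 s1' * (\<Prod>v\<in>S. K v (s1 v) (s1' v))) * (OT s2 s2' * (\<Prod>v\<in>T. K v (s2 v) (s2' v))))"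
    unfolding blockT_def K_def[symmetric] P_def[symmetric] merge_P by (simp add: summand)
  also have "\<dots> = blockT E p Aten S OS h * blockT E p Aten T OT h"
    unfolding blockT_def K_def[symmetric] P_def[symmetric]
    by (simp add: sum_product sum.swap[of _ "P T" "P S"])
  finally show ?thesis .
qed

lemma Ztilde_opprod_unit:
  "Ztilde V E d p Aten mu B (opprod {} (\<lambda>_ _. 1) B OB) F = Ztilde V E d p Aten mu B OB F"
proof -
  have "blockT E p Aten B (opprod {} (\<lambda>_ _. 1) B OB) h = blockT E p Aten B OB h" for h
    by (rule blockT_cong_op) (auto simp: opprod_def physconf_def)
  then show ?thesis
    unfolding Ztilde_def netc_def by simp
qed

lemma opprod_commute: "opprod A OA B OB = opprod B OB A OA"
  unfolding opprod_def by (simp add: fun_eq_iff mult.commute)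

lemma sum_hconfigs_merge:
  assumes "B \<subseteq> V"
  shows "(\<Sum>h\<in>hconfigs V E d. f h) =
    (\<Sum>h1\<in>hconfigs (V - B) E d. \<Sum>h2\<in>hconfigs B E d. f (merge (V - B) B (h1, h2)))"
proof -
  have "V = (V - B) \<union> B"
    using assms by blast
  then show ?thesis
    unfolding hconfigs_def by (subst (1) \<open>V = (V - B) \<union> B\<close>) (rule sum_PiE_merge, blast)
qed

definition boundary_msgs :: "('v \<Rightarrow> 'v \<Rightarrow> nat \<times> nat \<Rightarrow> complex) \<Rightarrow> 'v set set \<Rightarrow> 'v set
    \<Rightarrow> ('v \<Rightarrow> 'v set \<Rightarrow> nat \<times> nat) \<Rightarrow> complex" where
  "boundary_msgs mu E B h = (\<Prod>e\<in>E. \<Prod>u\<in>e \<inter> B. mu (other u e) u (h u e))"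

(* The contribution of the sites of B, with O_B inserted or without operator, once every edge at B
   carries the rank-one BP projector. *)
definition bp_block :: "'v set set \<Rightarrow> ('v set \<Rightarrow> nat) \<Rightarrow> ('v \<Rightarrow> nat)
    \<Rightarrow> ('v \<Rightarrow> nat \<Rightarrow> ('v set \<Rightarrow> nat) \<Rightarrow> complex) \<Rightarrow> ('v \<Rightarrow> 'v \<Rightarrow> nat \<times> nat \<Rightarrow> complex)
    \<Rightarrow> 'v set \<Rightarrow> (('v \<Rightarrow> nat) \<Rightarrow> ('v \<Rightarrow> nat) \<Rightarrow> complex) \<Rightarrow> complex" where
  "bp_block E d p Aten mu B OB =
     (\<Sum>h\<in>hconfigs B E d. blockT E p Aten B OB h * boundary_msgs mu E B h)"

definition bp_block_norm :: "'v set set \<Rightarrow> ('v set \<Rightarrow> nat) \<Rightarrow> ('v \<Rightarrow> nat)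
    \<Rightarrow> ('v \<Rightarrow> nat \<Rightarrow> ('v set \<Rightarrow> nat) \<Rightarrow> complex) \<Rightarrow> ('v \<Rightarrow> 'v \<Rightarrow> nat \<times> nat \<Rightarrow> complex)
    \<Rightarrow> 'v set \<Rightarrow> complex" where
  "bp_block_norm E d p Aten mu B =
     (\<Sum>h\<in>hconfigs B E d. (\<Prod>v\<in>B. normT E p Aten v (h v)) * boundary_msgs mu E B h)"

locale peps_graph =
  fixes V :: "'v set" and E :: "'v set set"
  assumes finite_V: "finite V" and edges_in_V: "\<And>e. e \<in> E \<Longrightarrow> e \<subseteq> V"
begin

lemma prod_edgeM_factor:
  assumes "\<forall>e\<in>F. e \<inter> B = {}"
  obtains out where "\<And>h1 h2. (\<Prod>e\<in>E. edgeM mu d F e (\<lambda>u\<in>e. merge (V - B) B (h1, h2) u e))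
                                = out h1 * boundary_msgs mu E B h2"
proof
  fix h1 h2
  define m where "m e u g = mu (other u e) u (g u e)" for e u g
  have "edgeM mu d F e (\<lambda>u\<in>e. merge (V - B) B (h1, h2) u e)
      = (if e \<inter> B = {} then edgeM mu d F e (\<lambda>u\<in>e. h1 u e)
         else (\<Prod>u\<in>e - B. m e u h1) / msgI mu d e) * (\<Prod>u\<in>e \<inter> B. m e u h2)"
    if e: "e \<in> E" for e
  proof (cases "e \<inter> B = {}")
    case True
    then have "(\<lambda>u\<in>e. merge (V - B) B (h1, h2) u e) = (\<lambda>u\<in>e. h1 u e)"
      using edges_in_V[OF e] by (auto simp: merge_def intro!: restrict_ext)
    then show ?thesis using True by simp
  next
    case False
    then have "e \<notin> F" using assms by auto
    have "finite e" using e edges_in_V finite_V finite_subset by blast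
    have "(\<Prod>u\<in>e. mu (other u e) u (merge (V - B) B (h1, h2) u e))
        = (\<Prod>u\<in>e - B. m e u (merge (V - B) B (h1, h2))) *
          (\<Prod>u\<in>e \<inter> B. m e u (merge (V - B) B (h1, h2)))"
      unfolding m_def by (subst prod.Int_Diff[OF \<open>finite e\<close>, of _ B]) (rule mult.commute)
    also have "\<dots> = (\<Prod>u\<in>e - B. m e u h1) * (\<Prod>u\<in>e \<inter> B. m e u h2)"
      using edges_in_V[OF e] by (intro arg_cong2[where f = "(*)"] prod.cong) (auto simp: m_def)
    finally show ?thesis using False \<open>e \<notin> F\<close> by (simp add: edgeM_def bpproj_def m_def)
  qed
  then show "(\<Prod>e\<in>E. edgeM mu d F e (\<lambda>u\<in>e. merge (V - B) B (h1, h2) u e))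
      = (\<Prod>e\<in>E. if e \<inter> B = {} then edgeM mu d F e (\<lambda>u\<in>e. h1 u e)
                 else (\<Prod>u\<in>e - B. m e u h1) / msgI mu d e) * boundary_msgs mu E B h2"
    unfolding boundary_msgs_def m_def[symmetric] by (simp add: prod.distrib[symmetric])
qed

lemma Ztilde_factor_block:
  assumes "Sx \<subseteq> V" "B \<subseteq> V" "Sx \<inter> B = {}" "\<forall>e\<in>F. e \<inter> B = {}"
  obtains X
  where "Ztilde V E d p Aten mu (Sx \<union> B) (opprod Sx Ox B OB) F = X * bp_block E d p Aten mu B OB"
    and "Ztilde V E d p Aten mu Sx Ox F = X * bp_block_norm E d p Aten mu B"
proof -
  obtain out where out: "\<And>h1 h2. (\<Prod>e\<in>E. edgeM mu d F e (\<lambda>u\<in>e. merge (V - B) B (h1, h2) u e))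
                                = out h1 * boundary_msgs mu E B h2"
    using prod_edgeM_factor[OF assms(4)] by blast
  define N where "N h1 = (\<Prod>v\<in>V - Sx - B. normT E p Aten v (h1 v))" for h1
  define X where "X = (\<Sum>h1\<in>hconfigs (V - B) E d. blockT E p Aten Sx Ox h1 * N h1 * out h1)"
  have split: "Ztilde V E d p Aten mu S Op F =
      (\<Sum>h1\<in>hconfigs (V - B) E d. \<Sum>h2\<in>hconfigs B E d.
         blockT E p Aten S Op (merge (V - B) B (h1, h2)) *
         (\<Prod>v\<in>V - S. normT E p Aten v (merge (V - B) B (h1, h2) v)) * out h1 * boundary_msgs mu E B h2)"
    for S Op
    unfolding Ztilde_def netc_def sum_hconfigs_merge[OF assms(2)] by (simp add: out mult.assoc)
  have blockT_Sx: "blockT E p Aten Sx Ox (merge (V - B) B (h1, h2)) = blockT E p Aten Sx Ox h1" for h1 h2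
    using assms(1,3) by (intro blockT_cong_config) (auto simp: merge_def)
  have blockT_B: "blockT E p Aten B OB (merge (V - B) B (h1, h2)) = blockT E p Aten B OB h2" for h1 h2
    by (intro blockT_cong_config) (auto simp: merge_def)
  have finite: "finite Sx" "finite B"
    using assms(1,2) finite_V finite_subset by auto
  have norms_outside: "(\<Prod>v\<in>V - (Sx \<union> B). normT E p Aten v (merge (V - B) B (h1, h2) v)) = N h1"
    for h1 h2
    unfolding N_def by (auto simp: merge_def intro!: prod.cong)
  have "Ztilde V E d p Aten mu (Sx \<union> B) (opprod Sx Ox B OB) F
      = (\<Sum>h1\<in>hconfigs (V - B) E d. \<Sum>h2\<in>hconfigs B E d.
           (blockT E p Aten Sx Ox h1 * N h1 * out h1) * (blockT E p Aten B OB h2 * boundary_msgs mu E B h2))"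
    unfolding split blockT_opprod[OF finite assms(3)] blockT_Sx blockT_B norms_outside by (simp add: mult_ac)
  also have "\<dots> = X * bp_block E d p Aten mu B OB"
    unfolding X_def bp_block_def by (simp add: sum_product)
  finally have op:
    "Ztilde V E d p Aten mu (Sx \<union> B) (opprod Sx Ox B OB) F = X * bp_block E d p Aten mu B OB" .
  have "B \<subseteq> V - Sx"
    using assms(2,3) by blast
  have norms: "(\<Prod>v\<in>V - Sx. normT E p Aten v (merge (V - B) B (h1, h2) v))
      = N h1 * (\<Prod>v\<in>B. normT E p Aten v (h2 v))" for h1 h2
    unfolding N_def prod.subset_diff[OF \<open>B \<subseteq> V - Sx\<close> finite_Diff[OF finite_V]]
    by (auto simp: merge_def intro!: arg_cong2[where f = "(*)"] prod.cong)
  have "Ztilde V E d p Aten mu Sx Ox F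
      = (\<Sum>h1\<in>hconfigs (V - B) E d. \<Sum>h2\<in>hconfigs B E d.
           (blockT E p Aten Sx Ox h1 * N h1 * out h1) *
           ((\<Prod>v\<in>B. normT E p Aten v (h2 v)) * boundary_msgs mu E B h2))"
    unfolding split blockT_Sx norms by (simp add: mult_ac)
  also have "\<dots> = X * bp_block_norm E d p Aten mu B"
    unfolding X_def bp_block_norm_def by (simp add: sum_product)
  finally show thesis
    using op that by blast
qed

lemma Zpoly_opprod_eq_if_avoiding:
  assumes "Sx \<subseteq> V" "B \<subseteq> V" "Sx \<inter> B = {}" "\<forall>e\<in>F. e \<inter> B = {}"
    and "ZBP V E d p Aten mu (Sx \<union> B) (opprod Sx Ox B OB) \<noteq> 0" "ZBP V E d p Aten mu Sx Ox \<noteq> 0"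
  shows "Zpoly V E d p Aten mu (Sx \<union> B) (opprod Sx Ox B OB) F = Zpoly V E d p Aten mu Sx Ox F"
proof -
  obtain X where X: "Ztilde V E d p Aten mu (Sx \<union> B) (opprod Sx Ox B OB) F = X * bp_block E d p Aten mu B OB"
      "Ztilde V E d p Aten mu Sx Ox F = X * bp_block_norm E d p Aten mu B"
    using Ztilde_factor_block[OF assms(1-4)] .
  obtain X0 where X0: "ZBP V E d p Aten mu (Sx \<union> B) (opprod Sx Ox B OB) = X0 * bp_block E d p Aten mu B OB"
      "ZBP V E d p Aten mu Sx Ox = X0 * bp_block_norm E d p Aten mu B"
    using Ztilde_factor_block[OF assms(1-3), of "{}"] unfolding ZBP_def by blast
  show ?thesis
    using assms(5,6) unfolding Zpoly_def X X0 by simp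
qed

lemma ZBP_opprod_mult:
  assumes "A \<subseteq> V" "B \<subseteq> V" "A \<inter> B = {}"
  shows "ZBP V E d p Aten mu (A \<union> B) (opprod A OA B OB) * ZBP V E d p Aten mu {} (\<lambda>_ _. 1)
       = ZBP V E d p Aten mu A OA * ZBP V E d p Aten mu B OB"
proof -
  obtain X where "ZBP V E d p Aten mu (A \<union> B) (opprod A OA B OB) = X * bp_block E d p Aten mu B OB"
      "ZBP V E d p Aten mu A OA = X * bp_block_norm E d p Aten mu B"
    using Ztilde_factor_block[OF assms, of "{}"] unfolding ZBP_def by blast
  moreover obtain X0 where "ZBP V E d p Aten mu B OB = X0 * bp_block E d p Aten mu B OB"
      "ZBP V E d p Aten mu {} (\<lambda>_ _. 1) = X0 * bp_block_norm E d p Aten mu B"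
    using Ztilde_factor_block[where Sx = "{}" and F = "{}" and Ox = "\<lambda>_ _. 1" and B = B and OB = OB
        and d = d and p = p and Aten = Aten and mu = mu] assms(2)
    unfolding ZBP_def by (auto simp: Ztilde_opprod_unit)
  ultimately show ?thesis
    by simp
qed

lemma Zclus_opprod_eq_if_avoiding:
  assumes "Sx \<subseteq> V" "B \<subseteq> V" "Sx \<inter> B = {}" "csupp W \<inter> B = {}"
    and "ZBP V E d p Aten mu (Sx \<union> B) (opprod Sx Ox B OB) \<noteq> 0" "ZBP V E d p Aten mu Sx Ox \<noteq> 0"
  shows "Zclus V E d p Aten mu (Sx \<union> B) (opprod Sx Ox B OB) W = Zclus V E d p Aten mu Sx Ox W"
proof -
  have "\<forall>e\<in>l. e \<inter> B = {}" if "l \<in># W" for l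
    using assms(4) that unfolding csupp_def esupp_def by blast
  then show ?thesis
    unfolding Zclus_def using Zpoly_opprod_eq_if_avoiding[OF assms(1-3) _ assms(5,6)] by (simp cong: prod.cong)
qed

lemma Zclus_eq_norm_if_avoiding:
  assumes "B \<subseteq> V" "csupp W \<inter> B = {}"
    and "ZBP V E d p Aten mu B OB \<noteq> 0" "ZBP V E d p Aten mu {} (\<lambda>_ _. 1) \<noteq> 0"
  shows "Zclus V E d p Aten mu B OB W = Zclus V E d p Aten mu {} (\<lambda>_ _. 1) W"
  using Zclus_opprod_eq_if_avoiding[where Sx = "{}" and Ox = "\<lambda>_ _. 1" and OB = OB] assms
  by (simp add: Zclus_def Zpoly_def ZBP_def Ztilde_opprod_unit)

lemma Zclus_combination_unlinked:
  assumes "A \<subseteq> V" "B \<subseteq> V" "A \<inter> B = {}" "csupp W \<inter> A = {} \<or> csupp W \<inter> B = {}"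
    and "ZBP V E d p Aten mu (A \<union> B) (opprod A OA B OB) \<noteq> 0" "ZBP V E d p Aten mu {} (\<lambda>_ _. 1) \<noteq> 0"
    and "ZBP V E d p Aten mu A OA \<noteq> 0" "ZBP V E d p Aten mu B OB \<noteq> 0"
  shows "Zclus V E d p Aten mu (A \<union> B) (opprod A OA B OB) W + Zclus V E d p Aten mu {} (\<lambda>_ _. 1) W
       - Zclus V E d p Aten mu A OA W - Zclus V E d p Aten mu B OB W = 0"
  using assms(4)
proof
  assume "csupp W \<inter> A = {}"
  then show ?thesis
    using Zclus_opprod_eq_if_avoiding[where Sx = B and B = A and Ox = OB and OB = OA]
      Zclus_eq_norm_if_avoiding[where B = A and OB = OA] assms
    by (simp add: Un_commute opprod_commute Int_commute)
next
  assume "csupp W \<inter> B = {}"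
  then show ?thesis
    using Zclus_opprod_eq_if_avoiding[where Sx = A and Ox = OA and OB = OB]
      Zclus_eq_norm_if_avoiding[where OB = OB] assms by simp
qed

end

theorem mainTheorem8:
  fixes V :: "'v set" and E :: "'v set set" and d :: "'v set \<Rightarrow> nat" and p :: "'v \<Rightarrow> nat"
    and Aten :: "'v \<Rightarrow> nat \<Rightarrow> ('v set \<Rightarrow> nat) \<Rightarrow> complex"
    and mu :: "'v \<Rightarrow> 'v \<Rightarrow> nat \<times> nat \<Rightarrow> complex"
    and A B :: "'v set"
    and OA OB :: "('v \<Rightarrow> nat) \<Rightarrow> ('v \<Rightarrow> nat) \<Rightarrow> complex"
  defines "ins \<equiv> [({}, \<lambda>_ _. 1), (A, OA), (B, OB), (A \<union> B, opprod A OA B OB)]"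
  assumes finV: "finite V"
    and graph: "\<forall>e\<in>E. e \<subseteq> V \<and> card e = 2"
    and AV: "A \<subseteq> V" and BV: "B \<subseteq> V" and disj: "A \<inter> B = {}"
    and Zpos: "0 < Re (Zfull V E d p Aten {} (\<lambda>_ _. 1))"
    and BP: "bp_fixed_point V E d p Aten mu"
    and ZBPnz: "\<forall>(S, Op)\<in>set ins. ZBP V E d p Aten mu S Op \<noteq> 0"
    and OAnz: "expect V E d p Aten A OA \<noteq> 0"
    and OBnz: "expect V E d p Aten B OB \<noteq> 0"
    and summ: "\<forall>(S, Op)\<in>set ins.
       (\<lambda>W. norm (complex_of_real (ursell W) * Zclus V E d p Aten mu S Op W))
          summable_on connected_clusters E A B"
    and cexp: "\<forall>(S, Op)\<in>set ins. \<exists>L LBP.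
       exp L = Zfull V E d p Aten S Op \<and> exp LBP = ZBP V E d p Aten mu S Op \<and>
       L = LBP + (\<Sum>\<^sub>\<infinity>W\<in>connected_clusters E A B.
                     complex_of_real (ursell W) * Zclus V E d p Aten mu S Op W)"
  shows "expect V E d p Aten (A \<union> B) (opprod A OA B OB)
           - expect V E d p Aten A OA * expect V E d p Aten B OB
         = expect V E d p Aten A OA * expect V E d p Aten B OB *
           (exp (\<Sum>\<^sub>\<infinity>W\<in>{W\<in>connected_clusters E A B. csupp W \<inter> A \<noteq> {} \<and> csupp W \<inter> B \<noteq> {}}.
                  complex_of_real (ursell W) *
                  (Zclus V E d p Aten mu (A \<union> B) (opprod A OA B OB) W
                   + Zclus V E d p Aten mu {} (\<lambda>_ _. 1) W
                   - Zclus V E d p Aten mu A OA W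
                   - Zclus V E d p Aten mu B OB W)) - 1)"
proof -
  interpret peps_graph V E
    using finV graph by unfold_locales auto
  define CC where "CC = connected_clusters E A B"
  define cl where "cl S Op W = complex_of_real (ursell W) * Zclus V E d p Aten mu S Op W" for S Op W
  have expansion: "Zfull V E d p Aten S Op = ZBP V E d p Aten mu S Op * exp (infsum (cl S Op) CC)"
    and summable: "cl S Op summable_on CC" if "(S, Op) \<in> set ins" for S Op
    using cexp summ that unfolding cl_def CC_def by (auto simp: exp_add intro: abs_summable_summable)
  define T where "T = infsum (cl (A \<union> B) (opprod A OA B OB)) CC + infsum (cl {} (\<lambda>_ _. 1)) CC
      - infsum (cl A OA) CC - infsum (cl B OB) CC"
  have linked: "T = (\<Sum>\<^sub>\<infinity>W\<in>{W\<in>connected_clusters E A B. csupp W \<inter> A \<noteq> {} \<and> csupp W \<inter> B \<noteq> {}}.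
                  complex_of_real (ursell W) *
                  (Zclus V E d p Aten mu (A \<union> B) (opprod A OA B OB) W
                   + Zclus V E d p Aten mu {} (\<lambda>_ _. 1) W
                   - Zclus V E d p Aten mu A OA W
                   - Zclus V E d p Aten mu B OB W))"
    unfolding T_def
  proof (rule infsum_combination_vanishing_outside[symmetric])
    show "cl (A \<union> B) (opprod A OA B OB) summable_on CC" "cl {} (\<lambda>_ _. 1) summable_on CC"
      "cl A OA summable_on CC" "cl B OB summable_on CC"
      using summable unfolding ins_def by auto
  qed (use ZBPnz Zclus_combination_unlinked[OF AV BV disj]
        in \<open>auto simp: CC_def cl_def ins_def algebra_simps\<close>)
  moreover have "Zfull V E d p Aten (A \<union> B) (opprod A OA B OB) * Zfull V E d p Aten {} (\<lambda>_ _. 1)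
      = exp T * (Zfull V E d p Aten A OA * Zfull V E d p Aten B OB)"
    using expansion ZBP_opprod_mult[OF AV BV disj, of d p Aten mu OA OB] unfolding ins_def T_def
    by (simp add: exp_add exp_diff field_simps)
  moreover have "Zfull V E d p Aten {} (\<lambda>_ _. 1) \<noteq> 0"
    using Zpos by auto
  ultimately show ?thesis
    unfolding expect_def linked[symmetric] by (simp add: field_simps)
qed

end
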